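(* Let $x,v,g:[0,\infty)\to\mathbb{R}^3$ satisfy \[\dot x=v(t),\qquad \dot v=-a(x,t)v(t)+g(t),\] where the scalar coefficient satisfies $a(x,t)\ge H/(1+|x|^2)^{\beta}$ for some constants $H>0$ and $\beta<1/2$, and $|g(t)|=O((1+t)^{-\eta})$ for some constant $\eta>1$. Then $|v(t)|=O((1+t)^{-(\eta-1)})$, with the order constant depending only on $x(0)$, $v(0)$, $H$, $\beta$ and $\eta$. *)

theory Defs
  imports "HOL-Analysis.Analysis"
begin

end

theory Submission
  imports Defs
begin

text \<open>
  Along a solution put A(t) = a(x(t),t) \<ge> 0, so that v' = -A v + g and, wherever v \<noteq> 0,
  |v|' \<le> -A |v| + |g|. Hence |v| stays below every barrier whose derivative dominates
  -A |v| + |g| at the times where |v| exceeds it. The integrated forcing is such a barrier, which gives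
  |v| \<le> M = |v(0)| + Cg/(\<eta>-1); consequently |x(t)| \<le> |x(0)| + M t and
  A(t) \<ge> c (1+t) powr (-\<gamma>) with \<gamma> = max (2\<beta>) 0 < 1. As \<gamma> < 1, eventually (1+t) A(t) \<ge> \<eta>, and
  from then on K (1+t) powr (-(\<eta>-1)) is a barrier for every K \<ge> Cg; before that time M suffices.
\<close>

lemma continuous_on_if_has_vector_derivative:
  fixes f :: "real \<Rightarrow> 'a::real_normed_vector"
  assumes "\<And>t. t \<in> S \<Longrightarrow> (f has_vector_derivative f' t) (at t within S)"
  shows "continuous_on S f"
  unfolding continuous_on_eq_continuous_within
  using assms has_vector_derivative_continuous by blast

lemma nonpos_if_deriv_nonpos_where_pos:
  fixes f :: "real \<Rightarrow> real"
  assumes "a \<le> b" "continuous_on {a..b} f" "f a \<le> 0"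
    and deriv: "\<And>t. a < t \<Longrightarrow> t < b \<Longrightarrow> 0 < f t \<Longrightarrow> \<exists>D. (f has_real_derivative D) (at t) \<and> D \<le> 0"
  shows "f b \<le> 0"
proof (rule ccontr)
  assume "\<not> f b \<le> 0"
  define S where "S = {a..b} \<inter> f -` {..0}"
  have "closed S"
    unfolding S_def by (rule continuous_closed_preimage[OF assms(2)]) auto
  moreover have "S \<noteq> {}" "bdd_above S"
    using assms(1,3) unfolding S_def by (auto intro: bdd_aboveI[of _ b])
  ultimately have "Sup S \<in> S"
    by (rule closed_contains_Sup[rotated -1])
  then have s: "a \<le> Sup S" "Sup S \<le> b" "f (Sup S) \<le> 0"
    unfolding S_def by auto
  have pos: "0 < f t" if "Sup S < t" "t \<le> b" for t
  proof (rule ccontr)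
    assume "\<not> 0 < f t"
    then have "t \<in> S" using that s unfolding S_def by auto
    then have "t \<le> Sup S" using \<open>bdd_above S\<close> by (rule cSup_upper)
    then show False using that by simp
  qed
  have "f b \<le> f (Sup S)"
  proof (rule DERIV_nonpos_imp_decreasing_open[OF s(2)])
    show "\<exists>D. (f has_real_derivative D) (at t) \<and> D \<le> 0" if "Sup S < t" "t < b" for t
      using deriv pos that s by force
    show "continuous_on {Sup S..b} f"
      using assms(2) s by (auto intro: continuous_on_subset)
  qed
  with s \<open>\<not> f b \<le> 0\<close> show False by simp
qed

lemma has_real_derivative_norm:
  fixes v :: "real \<Rightarrow> 'a::real_inner"
  assumes "(v has_vector_derivative w) (at t)" "v t \<noteq> 0"
  shows "((\<lambda>s. norm (v s)) has_real_derivative sgn (v t) \<bullet> w) (at t)"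
proof -
  have "((\<lambda>s. norm (v s)) has_derivative (\<lambda>h. sgn (v t) \<bullet> (h *\<^sub>R w))) (at t)"
    using has_derivative_compose[OF assms(1)[unfolded has_vector_derivative_def]
        has_derivative_norm[OF assms(2)]]
    by (simp add: o_def inner_commute)
  then show ?thesis
    by (simp add: has_field_derivative_def mult_commute_abs)
qed

lemma norm_le_barrier:
  fixes v g :: "real \<Rightarrow> 'a::real_inner" and A B B' :: "real \<Rightarrow> real"
  assumes "t0 \<le> T"
    and dv: "\<And>t. t \<in> {t0..T} \<Longrightarrow> (v has_vector_derivative (- A t *\<^sub>R v t + g t)) (at t within {t0..T})"
    and dB: "\<And>t. t \<in> {t0..T} \<Longrightarrow> (B has_real_derivative B' t) (at t)"
    and B_nonneg: "\<And>t. t \<in> {t0<..<T} \<Longrightarrow> 0 \<le> B t"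
    and barrier: "\<And>t. t \<in> {t0<..<T} \<Longrightarrow> B t < norm (v t) \<Longrightarrow> norm (g t) - A t * norm (v t) \<le> B' t"
    and init: "norm (v t0) \<le> B t0"
  shows "norm (v T) \<le> B T"
proof -
  have "norm (v T) - B T \<le> 0"
  proof (rule nonpos_if_deriv_nonpos_where_pos[OF \<open>t0 \<le> T\<close>])
    have "continuous_on {t0..T} v"
      using dv by (rule continuous_on_if_has_vector_derivative)
    moreover have "continuous_on {t0..T} B"
      using dB by (intro continuous_at_imp_continuous_on) (blast intro: DERIV_isCont)
    ultimately show "continuous_on {t0..T} (\<lambda>t. norm (v t) - B t)"
      by (intro continuous_intros)
    show "norm (v t0) - B t0 \<le> 0" using init by simp
  next
    fix t assume t: "t0 < t" "t < T" "0 < norm (v t) - B t"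
    then have "v t \<noteq> 0" using B_nonneg[of t] by auto
    have "(v has_vector_derivative (- A t *\<^sub>R v t + g t)) (at t)"
      using dv[of t] t by (simp add: at_within_Icc_at)
    from has_real_derivative_norm[OF this \<open>v t \<noteq> 0\<close>] dB[of t] t
    have "((\<lambda>t. norm (v t) - B t) has_real_derivative
        sgn (v t) \<bullet> (- A t *\<^sub>R v t + g t) - B' t) (at t)"
      by (intro derivative_intros) auto
    moreover have "sgn (v t) \<bullet> (- A t *\<^sub>R v t + g t) \<le> norm (g t) - A t * norm (v t)"
    proof -
      have "sgn (v t) \<bullet> v t = norm (v t)"
        using \<open>v t \<noteq> 0\<close> by (simp add: sgn_div_norm dot_square_norm power2_eq_square)
      moreover have "sgn (v t) \<bullet> g t \<le> norm (g t)"
        using norm_cauchy_schwarz[of "sgn (v t)" "g t"] \<open>v t \<noteq> 0\<close> by (simp add: norm_sgn)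
      ultimately show ?thesis by (simp add: inner_diff_right)
    qed
    ultimately show "\<exists>D. ((\<lambda>t. norm (v t) - B t) has_real_derivative D) (at t) \<and> D \<le> 0"
      using barrier[of t] t by force
  qed
  then show ?thesis by simp
qed

lemma has_real_derivative_one_plus_powr:
  fixes t r :: real
  assumes "-1 < t"
  shows "((\<lambda>t. (1 + t) powr r) has_real_derivative r * (1 + t) powr (r - 1)) (at t)"
  using assms by (auto intro!: derivative_eq_intros)

lemma norm_le_of_nonneg_damping:
  fixes v g :: "real \<Rightarrow> 'a::real_inner"
  assumes dv: "\<And>t. 0 \<le> t \<Longrightarrow> (v has_vector_derivative (- A t *\<^sub>R v t + g t)) (at t within {0..})"
    and A_nonneg: "\<And>t. 0 \<le> t \<Longrightarrow> 0 \<le> A t"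
    and g_bound: "\<And>t. 0 \<le> t \<Longrightarrow> norm (g t) \<le> Cg * (1 + t) powr (- \<eta>)"
    and "1 < \<eta>" "0 \<le> T"
  shows "norm (v T) \<le> norm (v 0) + Cg / (\<eta> - 1)"
proof -
  have "0 \<le> Cg" using g_bound[of 0] order_trans[OF norm_ge_zero, of "g 0" Cg] by simp
  define B where "B t = norm (v 0) + Cg / (\<eta> - 1) * (1 - (1 + t) powr (1 - \<eta>))" for t
  have dB: "(B has_real_derivative Cg * (1 + t) powr (- \<eta>)) (at t)" if "0 \<le> t" for t
  proof -
    have "(B has_real_derivative
        0 + Cg / (\<eta> - 1) * (0 - (1 - \<eta>) * (1 + t) powr (1 - \<eta> - 1))) (at t)"
      unfolding B_def using that
      by (intro DERIV_add DERIV_cmult DERIV_diff DERIV_const has_real_derivative_one_plus_powr) simp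
    moreover have "0 + Cg / (\<eta> - 1) * (0 - (1 - \<eta>) * (1 + t) powr (1 - \<eta> - 1))
        = Cg * (1 + t) powr (- \<eta>)"
      using \<open>1 < \<eta>\<close> by (simp add: field_simps)
    ultimately show ?thesis by simp
  qed
  have B_bounds: "norm (v 0) \<le> B t" "B t \<le> norm (v 0) + Cg / (\<eta> - 1)" if "0 \<le> t" for t
  proof -
    have "0 \<le> Cg / (\<eta> - 1)" using \<open>0 \<le> Cg\<close> \<open>1 < \<eta>\<close> by simp
    moreover have "0 \<le> 1 - (1 + t) powr (1 - \<eta>)" "1 - (1 + t) powr (1 - \<eta>) \<le> 1"
      using that \<open>1 < \<eta>\<close> powr_mono[of "1 - \<eta>" 0 "1 + t"] by auto
    ultimately have "0 \<le> Cg / (\<eta> - 1) * (1 - (1 + t) powr (1 - \<eta>))"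
      and "Cg / (\<eta> - 1) * (1 - (1 + t) powr (1 - \<eta>)) \<le> Cg / (\<eta> - 1)"
      by (blast intro: mult_nonneg_nonneg mult_left_le)+
    then show "norm (v 0) \<le> B t" "B t \<le> norm (v 0) + Cg / (\<eta> - 1)"
      unfolding B_def by linarith+
  qed
  have "norm (v T) \<le> B T"
  proof (rule norm_le_barrier[OF \<open>0 \<le> T\<close>])
    show "(v has_vector_derivative (- A t *\<^sub>R v t + g t)) (at t within {0..T})" if "t \<in> {0..T}" for t
      using dv[of t] that by (auto intro: has_vector_derivative_within_subset)
    show "norm (g t) - A t * norm (v t) \<le> Cg * (1 + t) powr (- \<eta>)" if "t \<in> {0<..<T}" for t
    proof -
      have "0 \<le> A t * norm (v t)" using A_nonneg[of t] that by simp
      then show ?thesis using g_bound[of t] that by simp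
    qed
    show "(B has_real_derivative Cg * (1 + t) powr (- \<eta>)) (at t)" if "t \<in> {0..T}" for t
      using dB that by simp
    show "0 \<le> B t" if "t \<in> {0<..<T}" for t
      using B_bounds(1)[of t] that order_trans[OF norm_ge_zero] by fastforce
    show "norm (v 0) \<le> B 0" using B_bounds(1)[of 0] by simp
  qed
  then show ?thesis using B_bounds[OF \<open>0 \<le> T\<close>] by simp
qed

lemma norm_le_of_speed_bound:
  fixes x v :: "real \<Rightarrow> 'a::real_normed_vector"
  assumes dx: "\<And>t. 0 \<le> t \<Longrightarrow> (x has_vector_derivative v t) (at t within {0..})"
    and v_bound: "\<And>t. 0 \<le> t \<Longrightarrow> norm (v t) \<le> M" and "0 \<le> T"
  shows "norm (x T) \<le> norm (x 0) + M * T"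
proof -
  have "norm (x T - x 0) \<le> M * norm (T - 0)"
  proof (rule differentiable_bound[of "{0..}"])
    show "(x has_derivative (\<lambda>h. h *\<^sub>R v t)) (at t within {0..})" if "t \<in> {0..}" for t
      using dx[of t] that by (simp add: has_vector_derivative_def)
    show "onorm (\<lambda>h. h *\<^sub>R v t) \<le> M" if "t \<in> {0..}" for t
      using v_bound[of t] that by (simp add: onorm_scaleR_left[OF bounded_linear_ident] onorm_id)
  qed (use \<open>0 \<le> T\<close> in auto)
  then show ?thesis using norm_triangle_ineq2[of "x T" "x 0"] \<open>0 \<le> T\<close> by simp
qed

lemma powr_le_powr_max:
  fixes s r \<beta> :: real
  assumes "1 \<le> s" "s \<le> r\<^sup>2" "0 \<le> r"
  shows "s powr \<beta> \<le> r powr max (2 * \<beta>) 0"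
proof (cases "\<beta> \<le> 0")
  case True
  have "1 \<le> r\<^sup>2" using assms by simp
  then have "1 \<le> r" using \<open>0 \<le> r\<close> by (simp add: power2_ge_1_iff)
  then show ?thesis using True assms(1) powr_mono[of \<beta> 0 s] by simp
next
  case False
  then have "s powr \<beta> \<le> (r\<^sup>2) powr \<beta>" using assms by (intro powr_mono2) auto
  also have "\<dots> = r powr (2 * \<beta>)" using \<open>0 \<le> r\<close> by (simp add: powr_powr[symmetric] powr_realpow)
  finally show ?thesis using False by simp
qed

lemma damping_lower_bound:
  fixes H \<beta> n p M t :: real
  assumes "0 \<le> H" "0 \<le> n" "n \<le> p + M * t" "0 \<le> p" "0 \<le> M" "0 \<le> t"
  shows "H / (1 + p + M) powr max (2 * \<beta>) 0 * (1 + t) powr (- max (2 * \<beta>) 0)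
    \<le> H / (1 + n\<^sup>2) powr \<beta>"
proof -
  define P where "P = 1 + p + M"
  have "0 \<le> p * t" using assms by simp
  then have "1 + n \<le> P * (1 + t)"
    using assms unfolding P_def distrib_left distrib_right by linarith
  then have "1 + n\<^sup>2 \<le> (P * (1 + t))\<^sup>2"
    using \<open>0 \<le> n\<close> power_mono[of "1 + n" "P * (1 + t)" 2] by (simp add: power2_eq_square algebra_simps)
  then have "(1 + n\<^sup>2) powr \<beta> \<le> (P * (1 + t)) powr max (2 * \<beta>) 0"
    using assms unfolding P_def by (intro powr_le_powr_max) auto
  also have "\<dots> = P powr max (2 * \<beta>) 0 * (1 + t) powr max (2 * \<beta>) 0"
    using assms unfolding P_def by (simp add: powr_mult)
  finally have "H / (P powr max (2 * \<beta>) 0 * (1 + t) powr max (2 * \<beta>) 0) \<le> H / (1 + n\<^sup>2) powr \<beta>"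
    using assms add_pos_nonneg[of 1 "n\<^sup>2"] by (intro divide_left_mono mult_pos_pos) (auto simp: P_def)
  then show ?thesis
    unfolding P_def by (simp add: powr_minus divide_inverse)
qed

lemma damping_dominates_after_threshold:
  fixes c \<eta> \<gamma> t :: real and A :: "real \<Rightarrow> real"
  assumes "0 < c" "0 < \<eta>" "\<gamma> < 1"
    and A_lower: "\<And>t. 0 \<le> t \<Longrightarrow> c * (1 + t) powr (- \<gamma>) \<le> A t"
    and "(\<eta> / c) powr (1 / (1 - \<gamma>)) \<le> t"
  shows "\<eta> \<le> (1 + t) * A t"
proof -
  have "0 \<le> t" using assms(5) order_trans[OF powr_ge_zero] by blast
  have "\<eta> / c = ((\<eta> / c) powr (1 / (1 - \<gamma>))) powr (1 - \<gamma>)"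
    using assms by (simp add: powr_powr)
  also have "\<dots> \<le> (1 + t) powr (1 - \<gamma>)"
    using assms by (intro powr_mono2) auto
  finally have "\<eta> \<le> c * (1 + t) powr (1 - \<gamma>)"
    using \<open>0 < c\<close> by (simp add: field_simps)
  also have "\<dots> = (1 + t) * (c * (1 + t) powr (- \<gamma>))"
    using \<open>0 \<le> t\<close> by (simp add: powr_diff powr_minus field_simps)
  also have "\<dots> \<le> (1 + t) * A t"
    using A_lower[OF \<open>0 \<le> t\<close>] \<open>0 \<le> t\<close> by (intro mult_left_mono) auto
  finally show ?thesis .
qed

lemma le_decay_bound_upto:
  fixes M K e t T0 :: real
  assumes "0 \<le> M" "0 \<le> e" "0 \<le> t" "t \<le> T0" "M * (1 + T0) powr e \<le> K"
  shows "M \<le> K * (1 + t) powr (- e)"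
proof -
  have "M * (1 + t) powr e \<le> M * (1 + T0) powr e"
    using assms by (intro mult_left_mono powr_mono2) auto
  then have "M * (1 + t) powr e * (1 + t) powr (- e) \<le> K * (1 + t) powr (- e)"
    using assms(5) by (intro mult_right_mono) auto
  moreover have "(1 + t) powr e * (1 + t) powr (- e) = 1"
    using \<open>0 \<le> t\<close> by (simp add: powr_add[symmetric])
  ultimately show ?thesis by (simp add: mult.assoc)
qed

lemma norm_decay_if_damping_dominates:
  fixes v g :: "real \<Rightarrow> 'a::real_inner"
  assumes dv: "\<And>t. 0 \<le> t \<Longrightarrow> (v has_vector_derivative (- A t *\<^sub>R v t + g t)) (at t within {0..})"
    and g_bound: "\<And>t. 0 \<le> t \<Longrightarrow> norm (g t) \<le> Cg * (1 + t) powr (- \<eta>)"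
    and damping: "\<And>t. T0 \<le> t \<Longrightarrow> \<eta> \<le> (1 + t) * A t"
    and "0 \<le> \<eta>" "0 \<le> T0" "T0 \<le> T" "Cg \<le> K"
    and init: "norm (v T0) \<le> K * (1 + T0) powr (- (\<eta> - 1))"
  shows "norm (v T) \<le> K * (1 + T) powr (- (\<eta> - 1))"
proof (rule norm_le_barrier[where B = "\<lambda>t. K * (1 + t) powr (- (\<eta> - 1))"
      and B' = "\<lambda>t. K * (- (\<eta> - 1) * (1 + t) powr (- \<eta>))"])
  show "T0 \<le> T" "norm (v T0) \<le> K * (1 + T0) powr (- (\<eta> - 1))" by fact+
  have "0 \<le> K" using g_bound[of 0] \<open>Cg \<le> K\<close> order_trans[OF norm_ge_zero, of "g 0" Cg] by simp
  then show "0 \<le> K * (1 + t) powr (- (\<eta> - 1))" for t by simp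
  show "(v has_vector_derivative (- A t *\<^sub>R v t + g t)) (at t within {T0..T})" if "t \<in> {T0..T}" for t
    using dv[of t] that \<open>0 \<le> T0\<close> by (auto intro: has_vector_derivative_within_subset)
  show "((\<lambda>t. K * (1 + t) powr (- (\<eta> - 1))) has_real_derivative K * (- (\<eta> - 1) * (1 + t) powr (- \<eta>))) (at t)"
    if "t \<in> {T0..T}" for t
    using DERIV_cmult[OF has_real_derivative_one_plus_powr, of t K "- (\<eta> - 1)"] that \<open>0 \<le> T0\<close> by simp
  fix t assume t: "t \<in> {T0<..<T}" and above: "K * (1 + t) powr (- (\<eta> - 1)) < norm (v t)"
  define E where "E = (1 + t) powr (- \<eta>)"
  have "0 < 1 + t" "0 \<le> E" using t \<open>0 \<le> T0\<close> by (auto simp: E_def)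
  have "0 \<le> (1 + t) * A t" using damping[of t] t \<open>0 \<le> \<eta>\<close> by simp
  then have "0 \<le> A t" using \<open>0 < 1 + t\<close> by (simp add: zero_le_mult_iff)
  have "K * \<eta> * E \<le> K * ((1 + t) * A t) * E"
    using damping[of t] t \<open>0 \<le> K\<close> \<open>0 \<le> E\<close> by (intro mult_right_mono mult_left_mono) auto
  also have "\<dots> = A t * (K * (1 + t) powr (- (\<eta> - 1)))"
    using \<open>0 < 1 + t\<close> by (simp add: E_def powr_diff powr_minus field_simps)
  also have "\<dots> \<le> A t * norm (v t)"
    using above \<open>0 \<le> A t\<close> by (intro mult_left_mono) auto
  finally have "K * \<eta> * E \<le> A t * norm (v t)" .
  moreover have "norm (g t) \<le> K * E"
  proof -
    have "Cg * E \<le> K * E" using \<open>Cg \<le> K\<close> \<open>0 \<le> E\<close> by (rule mult_right_mono)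
    moreover have "norm (g t) \<le> Cg * E" using g_bound[of t] t \<open>0 \<le> T0\<close> by (simp add: E_def)
    ultimately show ?thesis by linarith
  qed
  ultimately show "norm (g t) - A t * norm (v t) \<le> K * (- (\<eta> - 1) * (1 + t) powr (- \<eta>))"
    unfolding E_def by (simp add: algebra_simps)
qed

text \<open>
  Here r and s stand for |x(0)| and |v(0)|, M bounds |v|, H / (1 + r + M) powr \<gamma> is the constant c
  of the damping bound, and T0 is the time after which (1+t) A(t) \<ge> \<eta>.
\<close>
definition velocity_decay_constant :: "real \<Rightarrow> real \<Rightarrow> real \<Rightarrow> real \<Rightarrow> real \<Rightarrow> real \<Rightarrow> real" where
  "velocity_decay_constant H \<beta> \<eta> Cg r s =
    (let M = s + Cg / (\<eta> - 1);
         \<gamma> = max (2 * \<beta>) 0;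
         T0 = (\<eta> / (H / (1 + r + M) powr \<gamma>)) powr (1 / (1 - \<gamma>))
     in max Cg (M * (1 + T0) powr (\<eta> - 1)))"

lemma velocity_decay:
  fixes x v g :: "real \<Rightarrow> 'a::real_inner" and A :: "real \<Rightarrow> real"
  assumes "0 < H" "\<beta> < 1/2" "1 < \<eta>"
    and dx: "\<And>t. 0 \<le> t \<Longrightarrow> (x has_vector_derivative v t) (at t within {0..})"
    and dv: "\<And>t. 0 \<le> t \<Longrightarrow> (v has_vector_derivative (- A t *\<^sub>R v t + g t)) (at t within {0..})"
    and damping: "\<And>t. 0 \<le> t \<Longrightarrow> H / (1 + (norm (x t))\<^sup>2) powr \<beta> \<le> A t"
    and g_bound: "\<And>t. 0 \<le> t \<Longrightarrow> norm (g t) \<le> Cg * (1 + t) powr (- \<eta>)"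
    and "0 \<le> t"
  shows "norm (v t)
    \<le> velocity_decay_constant H \<beta> \<eta> Cg (norm (x 0)) (norm (v 0)) * (1 + t) powr (- (\<eta> - 1))"
proof -
  define M where "M = norm (v 0) + Cg / (\<eta> - 1)"
  define \<gamma> where "\<gamma> = max (2 * \<beta>) 0"
  define c where "c = H / (1 + norm (x 0) + M) powr \<gamma>"
  define T0 where "T0 = (\<eta> / c) powr (1 / (1 - \<gamma>))"
  define K where "K = max Cg (M * (1 + T0) powr (\<eta> - 1))"
  have K_eq: "velocity_decay_constant H \<beta> \<eta> Cg (norm (x 0)) (norm (v 0)) = K"
    by (simp add: velocity_decay_constant_def Let_def K_def T0_def c_def \<gamma>_def M_def)
  have "0 \<le> Cg" using g_bound[of 0] order_trans[OF norm_ge_zero, of "g 0" Cg] by simp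
  then have "0 \<le> M" using \<open>1 < \<eta>\<close> by (simp add: M_def)
  have "0 < 1 + norm (x 0) + M" using \<open>0 \<le> M\<close> norm_ge_zero[of "x 0"] by linarith
  then have "0 < c" using \<open>0 < H\<close> by (simp add: c_def)
  have A_nonneg: "0 \<le> A t" if "0 \<le> t" for t
    using damping[OF that] \<open>0 < H\<close> by (meson order_trans divide_nonneg_nonneg powr_ge_zero less_imp_le)
  have v_bound: "norm (v t) \<le> M" if "0 \<le> t" for t
    using norm_le_of_nonneg_damping[OF dv A_nonneg g_bound \<open>1 < \<eta>\<close> that] by (simp add: M_def)
  have A_lower: "c * (1 + t) powr (- \<gamma>) \<le> A t" if "0 \<le> t" for t
    using damping_lower_bound[OF _ _ norm_le_of_speed_bound[OF dx v_bound that], of H \<beta>]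
      damping[OF that] \<open>0 < H\<close> \<open>0 \<le> M\<close> that
    by (simp add: c_def \<gamma>_def)
  have "0 \<le> T0" by (simp add: T0_def)
  have strong_damping: "\<eta> \<le> (1 + t) * A t" if "T0 \<le> t" for t
    using damping_dominates_after_threshold[OF \<open>0 < c\<close> _ _ A_lower] \<open>1 < \<eta>\<close> \<open>\<beta> < 1/2\<close> that
    by (simp add: T0_def \<gamma>_def)
  have early: "norm (v s) \<le> K * (1 + s) powr (- (\<eta> - 1))" if "0 \<le> s" "s \<le> T0" for s
  proof -
    have "M \<le> K * (1 + s) powr (- (\<eta> - 1))"
      using \<open>1 < \<eta>\<close> by (intro le_decay_bound_upto[OF \<open>0 \<le> M\<close> _ that]) (auto simp: K_def)
    then show ?thesis using v_bound[OF \<open>0 \<le> s\<close>] by linarith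
  qed
  show ?thesis
  proof (cases "t \<le> T0")
    case True
    then show ?thesis using early \<open>0 \<le> t\<close> K_eq by simp
  next
    case False
    then show ?thesis
      using norm_decay_if_damping_dominates[OF dv g_bound strong_damping _ \<open>0 \<le> T0\<close> _ _ early]
        \<open>1 < \<eta>\<close> \<open>0 \<le> T0\<close> K_eq
      by (simp add: K_def)
  qed
qed

theorem lemma4:
  fixes H \<beta> \<eta> Cg :: real
  assumes "H > 0" and "\<beta> < 1/2" and "\<eta> > 1"
  shows "\<exists>K :: real^3 \<Rightarrow> real^3 \<Rightarrow> real.
    \<forall>(x :: real \<Rightarrow> real^3) (v :: real \<Rightarrow> real^3) (g :: real \<Rightarrow> real^3)
      (a :: real^3 \<Rightarrow> real \<Rightarrow> real).
      (\<forall>t\<ge>0. (x has_vector_derivative v t) (at t within {0..})) \<and>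
      (\<forall>t\<ge>0. (v has_vector_derivative (- (a (x t) t) *\<^sub>R v t + g t)) (at t within {0..})) \<and>
      (\<forall>y t. t \<ge> 0 \<longrightarrow> a y t \<ge> H / (1 + (norm y)\<^sup>2) powr \<beta>) \<and>
      (\<forall>t\<ge>0. norm (g t) \<le> Cg * (1 + t) powr (- \<eta>))
      \<longrightarrow> (\<forall>t\<ge>0. norm (v t) \<le> K (x 0) (v 0) * (1 + t) powr (- (\<eta> - 1)))"
proof (intro exI[of _ "\<lambda>x0 v0. velocity_decay_constant H \<beta> \<eta> Cg (norm x0) (norm v0)"] allI impI)
  fix x v g :: "real \<Rightarrow> real^3" and a :: "real^3 \<Rightarrow> real \<Rightarrow> real" and t :: real
  assume hyps: "(\<forall>t\<ge>0. (x has_vector_derivative v t) (at t within {0..})) \<and>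
      (\<forall>t\<ge>0. (v has_vector_derivative (- (a (x t) t) *\<^sub>R v t + g t)) (at t within {0..})) \<and>
      (\<forall>y t. t \<ge> 0 \<longrightarrow> a y t \<ge> H / (1 + (norm y)\<^sup>2) powr \<beta>) \<and>
      (\<forall>t\<ge>0. norm (g t) \<le> Cg * (1 + t) powr (- \<eta>))"
    and "0 \<le> t"
  show "norm (v t) \<le> velocity_decay_constant H \<beta> \<eta> Cg (norm (x 0)) (norm (v 0)) * (1 + t) powr (- (\<eta> - 1))"
    using velocity_decay[OF assms, of x v "\<lambda>t. a (x t) t" g Cg t] hyps \<open>0 \<le> t\<close> by blast
qed

end
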